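(* Let $G$ be a connected chordal graph and $X\subseteq V(G)$ a vertex subset such that $G[X]$ is connected. Then there is a bijection $f$ from the set of connected components of $G[N_G(X)]$ to the set of connected components of $G-X$ such that a connected component $C$ of $G[N_G(X)]$ is contained in a connected component $H$ of $G-X$ if and only if $H=f(C)$.
   Context: A graph is chordal if it has no induced cycle of length at least $4$. For $X\subseteq V(G)$, $N_G(X)=(\bigcup_{v\in X}N_G(v))\setminus X$. *)

theory Defs
  imports Main
begin

definition graph :: "'a set \<Rightarrow> ('a \<Rightarrow> 'a \<Rightarrow> bool) \<Rightarrow> bool" where
  "graph V E \<longleftrightarrow> finite V \<and> (\<forall>u v. E u v \<longrightarrow> u \<in> V \<and> v \<in> V)
     \<and> (\<forall>u v. E u v \<longrightarrow> E v u) \<and> (\<forall>v. \<not> E v v)"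

definition reach_in :: "('a \<Rightarrow> 'a \<Rightarrow> bool) \<Rightarrow> 'a set \<Rightarrow> 'a \<Rightarrow> 'a \<Rightarrow> bool" where
  "reach_in E S = (\<lambda>u v. E u v \<and> u \<in> S \<and> v \<in> S)\<^sup>*\<^sup>*"

definition connected_in :: "('a \<Rightarrow> 'a \<Rightarrow> bool) \<Rightarrow> 'a set \<Rightarrow> bool" where
  "connected_in E S \<longleftrightarrow> S \<noteq> {} \<and> (\<forall>u\<in>S. \<forall>v\<in>S. reach_in E S u v)"

definition components :: "('a \<Rightarrow> 'a \<Rightarrow> bool) \<Rightarrow> 'a set \<Rightarrow> 'a set set" where
  "components E S = {C. C \<subseteq> S \<and> connected_in E C
      \<and> (\<forall>D. C \<subseteq> D \<and> D \<subseteq> S \<and> connected_in E D \<longrightarrow> D = C)}"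

definition nbhd :: "'a set \<Rightarrow> ('a \<Rightarrow> 'a \<Rightarrow> bool) \<Rightarrow> 'a set \<Rightarrow> 'a set" where
  "nbhd V E X = {v \<in> V. \<exists>x\<in>X. E x v} - X"

definition induced_cycle :: "'a set \<Rightarrow> ('a \<Rightarrow> 'a \<Rightarrow> bool) \<Rightarrow> 'a list \<Rightarrow> bool" where
  "induced_cycle V E vs \<longleftrightarrow> length vs \<ge> 4 \<and> distinct vs \<and> set vs \<subseteq> V
     \<and> (\<forall>i < length vs. E (vs ! i) (vs ! ((i + 1) mod length vs)))
     \<and> (\<forall>i < length vs. \<forall>j < length vs. E (vs ! i) (vs ! j) \<longrightarrow>
           j = (i + 1) mod length vs \<or> i = (j + 1) mod length vs)"

definition chordal :: "'a set \<Rightarrow> ('a \<Rightarrow> 'a \<Rightarrow> bool) \<Rightarrow> bool" where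
  "chordal V E \<longleftrightarrow> \<not> (\<exists>vs. induced_cycle V E vs)"

end

theory Submission
  imports Defs
begin

text \<open>Since G is connected, every component of G - X contains a neighbour of X; so mapping a
  component of G[N(X)] to the component of G - X containing it is onto, and it is injective as
  soon as two vertices of N(X) joined in G - X are joined inside N(X). If they were not, take a
  shortest path P in G - X between vertices a, b of N(X) not joined inside N(X): its inner
  vertices avoid N(X), and a, b are not adjacent. Closing P by a shortest path from b to a
  through the connected set X yields an induced cycle of length at least 4, as no inner vertex
  of P has a neighbour in X.\<close>

lemma graph_symp: "graph V E \<Longrightarrow> symp E"
  unfolding graph_def by (auto intro: sympI)

lemma graph_irreflp: "graph V E \<Longrightarrow> irreflp E"
  unfolding graph_def by (auto intro: irreflpI)

lemma reach_in_refl [simp]: "reach_in E S u u"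
  unfolding reach_in_def by simp

lemma reach_in_edge: "E u v \<Longrightarrow> u \<in> S \<Longrightarrow> v \<in> S \<Longrightarrow> reach_in E S u v"
  unfolding reach_in_def by auto

lemma reach_in_trans: "reach_in E S u v \<Longrightarrow> reach_in E S v w \<Longrightarrow> reach_in E S u w"
  unfolding reach_in_def by (rule rtranclp_trans)

lemma reach_in_mono: "reach_in E S u v \<Longrightarrow> S \<subseteq> T \<Longrightarrow> reach_in E T u v"
  unfolding reach_in_def by (erule rtranclp_mono[THEN predicate2D, rotated]) auto

lemma reach_in_sym: "symp E \<Longrightarrow> reach_in E S u v \<Longrightarrow> reach_in E S v u"
  unfolding reach_in_def by (rule sympD[OF symp_rtranclp]) (auto simp: symp_def)

lemma reach_in_in_set: "reach_in E S u v \<Longrightarrow> u \<in> S \<Longrightarrow> v \<in> S"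
  unfolding reach_in_def by (induction rule: rtranclp_induct) auto

definition component_of :: "('a \<Rightarrow> 'a \<Rightarrow> bool) \<Rightarrow> 'a set \<Rightarrow> 'a \<Rightarrow> 'a set" where
  "component_of E S u = {v. reach_in E S u v}"

lemma mem_component_of [simp]: "v \<in> component_of E S u \<longleftrightarrow> reach_in E S u v"
  unfolding component_of_def by simp

lemma component_of_eq:
  assumes "symp E" and uv: "reach_in E S u v"
  shows "component_of E S u = component_of E S v"
proof -
  have vu: "reach_in E S v u" using reach_in_sym[OF assms] .
  show ?thesis
    unfolding component_of_def using reach_in_trans[OF uv] reach_in_trans[OF vu] by blast
qed

lemma component_of_eq_iff:
  assumes "symp E"
  shows "component_of E S u = component_of E S v \<longleftrightarrow> reach_in E S u v"
proof
  assume eq: "component_of E S u = component_of E S v"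
  have "v \<in> component_of E S v" by simp
  then have "v \<in> component_of E S u" unfolding eq .
  then show "reach_in E S u v" by simp
qed (rule component_of_eq[OF assms])

lemma component_of_mono: "S \<subseteq> T \<Longrightarrow> component_of E S u \<subseteq> component_of E T u"
  using reach_in_mono by fastforce

lemma UN_component_of:
  assumes "S \<subseteq> T"
  shows "(\<Union>c \<in> component_of E S u. component_of E T c) = component_of E T u"
proof (intro equalityI subsetI)
  fix v assume "v \<in> (\<Union>c \<in> component_of E S u. component_of E T c)"
  then obtain c where "reach_in E S u c" "reach_in E T c v" by auto
  then have "reach_in E T u v" using reach_in_mono[OF _ assms] reach_in_trans by metis
  then show "v \<in> component_of E T u" by simp
next
  fix v assume "v \<in> component_of E T u"
  then show "v \<in> (\<Union>c \<in> component_of E S u. component_of E T c)" by (intro UN_I[of u]) simp_all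
qed

lemma connected_in_component_of:
  assumes "symp E"
  shows "connected_in E (component_of E S u)"
proof -
  let ?C = "component_of E S u"
  have reach_C: "reach_in E ?C u v" if "reach_in E S u v" for v
    using that unfolding reach_in_def
  proof (induction rule: rtranclp_induct)
    case (step v w)
    have "reach_in E S u v" "reach_in E S u w"
      using step.hyps(1) rtranclp.rtrancl_into_rtrancl[OF step.hyps]
      unfolding reach_in_def by blast+
    then have "reach_in E ?C v w" using step.hyps(2) by (intro reach_in_edge) simp_all
    with step.IH show ?case unfolding reach_in_def by (rule rtranclp_trans)
  qed simp
  show ?thesis
    unfolding connected_in_def
  proof (intro conjI ballI)
    have "u \<in> ?C" by simp
    then show "?C \<noteq> {}" by blast
  next
    fix a b assume "a \<in> ?C" "b \<in> ?C"
    then have "reach_in E ?C u a" "reach_in E ?C u b" using reach_C by simp_all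
    then show "reach_in E ?C a b" using reach_in_sym[OF assms] reach_in_trans by metis
  qed
qed

lemma components_eq_image_component_of:
  assumes "symp E"
  shows "components E S = component_of E S ` S"
proof (intro equalityI subsetI)
  fix C assume "C \<in> components E S"
  then have CS: "C \<subseteq> S" and conn: "connected_in E C"
    and max: "\<And>D. C \<subseteq> D \<Longrightarrow> D \<subseteq> S \<Longrightarrow> connected_in E D \<Longrightarrow> D = C"
    unfolding components_def by auto
  obtain u where "u \<in> C" using conn unfolding connected_in_def by auto
  have "C \<subseteq> component_of E S u"
  proof
    fix v assume "v \<in> C"
    then have "reach_in E C u v" using conn \<open>u \<in> C\<close> unfolding connected_in_def by blast
    then show "v \<in> component_of E S u" using reach_in_mono[OF _ CS] by simp
  qed
  moreover have "component_of E S u \<subseteq> S"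
    using \<open>u \<in> C\<close> CS reach_in_in_set by fastforce
  ultimately have "component_of E S u = C"
    using max connected_in_component_of[OF assms] by blast
  then show "C \<in> component_of E S ` S" using \<open>u \<in> C\<close> CS by blast
next
  fix C assume "C \<in> component_of E S ` S"
  then obtain u where u: "u \<in> S" and C: "C = component_of E S u" by auto
  have "D = C" if "C \<subseteq> D" "D \<subseteq> S" "connected_in E D" for D
  proof -
    have "u \<in> D" using C \<open>C \<subseteq> D\<close> by auto
    have "D \<subseteq> C"
    proof
      fix v assume "v \<in> D"
      then have "reach_in E D u v" using \<open>u \<in> D\<close> \<open>connected_in E D\<close> unfolding connected_in_def by blast
      then show "v \<in> C" using reach_in_mono[OF _ \<open>D \<subseteq> S\<close>] C by simp
    qed
    then show ?thesis using \<open>C \<subseteq> D\<close> by blast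
  qed
  moreover have "C \<subseteq> S" using u C reach_in_in_set by fastforce
  ultimately show "C \<in> components E S"
    unfolding components_def using connected_in_component_of[OF assms] C by blast
qed

lemma components_bij_betw:
  assumes sym: "symp E" and "S \<subseteq> T"
    and reach_S: "\<And>t. t \<in> T \<Longrightarrow> \<exists>s\<in>S. reach_in E T t s"
    and reach_T_imp_S: "\<And>u w. u \<in> S \<Longrightarrow> w \<in> S \<Longrightarrow> reach_in E T u w \<Longrightarrow> reach_in E S u w"
  shows "\<exists>f. bij_betw f (components E S) (components E T)
           \<and> (\<forall>C \<in> components E S. \<forall>H \<in> components E T. C \<subseteq> H \<longleftrightarrow> H = f C)"
proof -
  define f where "f C = (\<Union>c\<in>C. component_of E T c)" for C
  have f_component_of: "f (component_of E S u) = component_of E T u" for u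
    unfolding f_def using \<open>S \<subseteq> T\<close> by (rule UN_component_of)
  have compS: "components E S = component_of E S ` S"
    and compT: "components E T = component_of E T ` T"
    using components_eq_image_component_of[OF sym] by auto
  have "inj_on f (components E S)"
  proof (rule inj_onI)
    fix C D assume "C \<in> components E S" "D \<in> components E S" "f C = f D"
    then obtain u w where uw: "u \<in> S" "w \<in> S" "C = component_of E S u" "D = component_of E S w"
      and "component_of E T u = component_of E T w"
      using f_component_of compS by auto
    then have "reach_in E S u w" using uw reach_T_imp_S component_of_eq_iff[OF sym] by blast
    then show "C = D" using uw component_of_eq[OF sym] by simp
  qed
  moreover have "f ` components E S = components E T"
  proof (intro equalityI subsetI)
    fix H assume "H \<in> f ` components E S"
    then show "H \<in> components E T" using compS compT f_component_of \<open>S \<subseteq> T\<close> by auto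
  next
    fix H assume "H \<in> components E T"
    then obtain t where "t \<in> T" "H = component_of E T t" using compT by auto
    moreover obtain s where "s \<in> S" "reach_in E T t s" using reach_S[OF \<open>t \<in> T\<close>] by blast
    ultimately have "H = f (component_of E S s)" using component_of_eq[OF sym] f_component_of by simp
    then show "H \<in> f ` components E S" using \<open>s \<in> S\<close> compS by blast
  qed
  moreover have "C \<subseteq> H \<longleftrightarrow> H = f C"
    if C: "C \<in> components E S" and H: "H \<in> components E T" for C H
  proof -
    obtain u t where u: "u \<in> S" "C = component_of E S u" and t: "H = component_of E T t"
      using C H compS compT by auto
    have "C \<subseteq> H \<longleftrightarrow> reach_in E T t u"
    proof
      assume "C \<subseteq> H"
      moreover have "u \<in> C" using u by simp
      ultimately show "reach_in E T t u" using t by auto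
    next
      assume "reach_in E T t u"
      then show "C \<subseteq> H" using u t component_of_eq[OF sym] component_of_mono[OF \<open>S \<subseteq> T\<close>] by simp
    qed
    also have "\<dots> \<longleftrightarrow> H = f C"
      using t u f_component_of component_of_eq_iff[OF sym] by simp
    finally show ?thesis .
  qed
  ultimately show ?thesis unfolding bij_betw_def by blast
qed

definition walk :: "('a \<Rightarrow> 'a \<Rightarrow> bool) \<Rightarrow> 'a set \<Rightarrow> 'a list \<Rightarrow> bool" where
  "walk E S p \<longleftrightarrow> p \<noteq> [] \<and> set p \<subseteq> S \<and> (\<forall>i. Suc i < length p \<longrightarrow> E (p!i) (p!Suc i))"

definition induced_path :: "('a \<Rightarrow> 'a \<Rightarrow> bool) \<Rightarrow> 'a set \<Rightarrow> 'a list \<Rightarrow> bool" where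
  "induced_path E S p \<longleftrightarrow> walk E S p \<and> distinct p
     \<and> (\<forall>i < length p. \<forall>j < length p. E (p!i) (p!j) \<longrightarrow> j = Suc i \<or> i = Suc j)"

lemma reach_in_imp_walk:
  assumes "reach_in E S u v" and "u \<in> S"
  shows "\<exists>p. walk E S p \<and> hd p = u \<and> last p = v"
  using assms(1) unfolding reach_in_def
proof (induction rule: rtranclp_induct)
  case base
  show ?case using assms(2) by (intro exI[of _ "[u]"]) (auto simp: walk_def)
next
  case (step v w)
  then obtain p where p: "walk E S p" "hd p = u" "last p = v" by auto
  with step.hyps(2) have "walk E S (p @ [w])"
    by (auto simp: walk_def nth_append last_conv_nth less_Suc_eq)
      (metis diff_Suc_Suc diff_zero)
  with p show ?case by (intro exI[of _ "p @ [w]"]) (auto simp: walk_def)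
qed

lemma walk_take: "walk E S p \<Longrightarrow> i < length p \<Longrightarrow> walk E S (take (Suc i) p)"
  unfolding walk_def by (auto dest: in_set_takeD)

lemma walk_drop: "walk E S p \<Longrightarrow> i < length p \<Longrightarrow> walk E S (drop i p)"
  unfolding walk_def by (auto dest: in_set_dropD)

lemma walk_shortcut:
  assumes walk: "walk E S p" and "a \<le> j" "j < length p"
    and junction: "0 < a \<Longrightarrow> E (p!(a - 1)) (p!j)"
  shows "walk E S (take a p @ drop j p)"
proof -
  let ?q = "take a p @ drop j p"
  have len: "length ?q = a + (length p - j)" using assms by simp
  have nth_q: "?q ! l = (if l < a then p!l else p!(l - a + j))" if "l < length ?q" for l
    using that assms by (auto simp: nth_append min_def) (metis add.commute)
  have "E (?q!l) (?q!Suc l)" if l: "Suc l < length ?q" for l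
  proof -
    consider "Suc l < a" | "Suc l = a" | "a \<le> l" by linarith
    then show ?thesis
    proof cases
      case 1
      then have "Suc l < length p" using assms by linarith
      then show ?thesis using nth_q[of l] nth_q[of "Suc l"] l walk 1 unfolding walk_def by simp
    next
      case 2
      then have "l = a - 1" "0 < a" by simp_all
      then show ?thesis using nth_q[of l] nth_q[of "Suc l"] l junction 2 by (simp add: len)
    next
      case 3
      then have "Suc (l - a + j) < length p" "Suc l - a + j = Suc (l - a + j)"
        using l len by linarith+
      then show ?thesis using nth_q[of l] nth_q[of "Suc l"] l walk 3 unfolding walk_def by simp
    qed
  qed
  moreover have "set ?q \<subseteq> set p" using set_take_subset set_drop_subset by fastforce
  ultimately show ?thesis using walk \<open>j < length p\<close> unfolding walk_def by auto
qed

lemma shortest_walk_induced_path: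
  assumes sym: "symp E" and irr: "irreflp E" and walk: "walk E S p"
    and shortest: "\<And>p'. walk E S p' \<Longrightarrow> hd p' = hd p \<Longrightarrow> last p' = last p \<Longrightarrow> length p \<le> length p'"
  shows "induced_path E S p"
proof -
  have no_shortcut: "\<not> walk E S (take a p @ drop j p)" if "a < j" "j < length p" "0 < a \<or> p!j = p!0"
    for a j
  proof
    assume "walk E S (take a p @ drop j p)"
    moreover have "hd (take a p @ drop j p) = hd p" "last (take a p @ drop j p) = last p"
      using that walk unfolding walk_def by (auto simp: hd_append hd_conv_nth hd_drop_conv_nth)
    ultimately show False using shortest that by fastforce
  qed
  have "p!i \<noteq> p!j" if ij: "i < j" "j < length p" for i j
  proof
    assume eq: "p!i = p!j"
    have "walk E S (take i p @ drop j p)"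
    proof (rule walk_shortcut[OF walk])
      assume "0 < i"
      then have "Suc (i - 1) = i" by simp
      then have "E (p!(i - 1)) (p!i)" using walk ij unfolding walk_def by (metis less_trans)
      then show "E (p!(i - 1)) (p!j)" using eq by simp
    qed (use ij in auto)
    then show False using no_shortcut[of i j] ij eq by (cases "i = 0") auto
  qed
  then have "distinct p" unfolding distinct_conv_nth by (metis linorder_neqE_nat)
  have adjacent: "j = Suc i" if ij: "i < j" "j < length p" "E (p!i) (p!j)" for i j
  proof (rule ccontr)
    assume "j \<noteq> Suc i"
    then have "walk E S (take (Suc i) p @ drop j p)"
      using walk_shortcut[OF walk] ij by simp
    then show False using no_shortcut[of "Suc i" j] ij \<open>j \<noteq> Suc i\<close> by simp
  qed
  have "j = Suc i \<or> i = Suc j" if "i < length p" "j < length p" "E (p!i) (p!j)" for i j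
    using that adjacent[of i j] adjacent[of j i] sym irr
    by (metis irreflpD linorder_neqE_nat sympD)
  with walk \<open>distinct p\<close> show ?thesis unfolding induced_path_def by blast
qed

lemma reach_in_imp_induced_path:
  assumes "symp E" and "irreflp E" and "reach_in E S u v" and "u \<in> S"
  obtains p where "induced_path E S p" "hd p = u" "last p = v"
proof -
  let ?P = "\<lambda>p. walk E S p \<and> hd p = u \<and> last p = v"
  obtain p0 where "?P p0" using reach_in_imp_walk[OF assms(3,4)] by blast
  then obtain p where "?P p" and "\<And>p'. ?P p' \<Longrightarrow> length p \<le> length p'"
    using ex_has_least_nat[of ?P p0 length] by blast
  then have "induced_path E S p"
    using shortest_walk_induced_path[OF assms(1,2)] by metis
  with \<open>?P p\<close> show thesis using that by blast
qed


locale glued_induced_paths =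
  fixes V :: "'a set" and E :: "'a \<Rightarrow> 'a \<Rightarrow> bool" and p q :: "'a list"
  assumes sym: "symp E" and irr: "irreflp E"
    and p: "induced_path E V p" and q: "induced_path E V q"
    and p_length: "3 \<le> length p" and q_length: "3 \<le> length q"
    and q_hd: "hd q = last p" and q_last: "last q = hd p"
    and interiors_disjoint: "\<And>l. 0 < l \<Longrightarrow> l < length q - 1 \<Longrightarrow> q!l \<notin> set p"
    and no_cross_edge:
      "\<And>i l. 0 < i \<Longrightarrow> i < length p - 1 \<Longrightarrow> 0 < l \<Longrightarrow> l < length q - 1 \<Longrightarrow> \<not> E (p!i) (q!l)"
begin

definition cycle :: "'a list" where
  "cycle = p @ butlast (tl q)"

lemma length_cycle: "length cycle = length p + length q - 2"
  using q_length unfolding cycle_def by simp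

lemma nth_cycle:
  "i < length cycle \<Longrightarrow> cycle!i = (if i < length p then p!i else q!(i - length p + 1))"
  unfolding cycle_def by (auto simp: nth_append nth_butlast nth_tl)

lemma p_hd: "p!0 = q!(length q - 1)" and p_last: "p!(length p - 1) = q!0"
proof -
  have "p \<noteq> []" "q \<noteq> []" using p_length q_length by auto
  then show "p!0 = q!(length q - 1)" "p!(length p - 1) = q!0"
    using q_hd q_last by (simp_all add: hd_conv_nth last_conv_nth)
qed

lemma p_adjacent: "Suc i < length p \<Longrightarrow> E (p!i) (p!Suc i)"
  and q_adjacent: "Suc i < length q \<Longrightarrow> E (q!i) (q!Suc i)"
  using p q unfolding induced_path_def walk_def by auto

lemma p_chordless: "i < length p \<Longrightarrow> j < length p \<Longrightarrow> E (p!i) (p!j) \<Longrightarrow> j = Suc i \<or> i = Suc j"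
  and q_chordless: "i < length q \<Longrightarrow> j < length q \<Longrightarrow> E (q!i) (q!j) \<Longrightarrow> j = Suc i \<or> i = Suc j"
  using p q unfolding induced_path_def by auto

lemma distinct_cycle: "distinct cycle"
proof -
  have "x \<notin> set p" if "x \<in> set (butlast (tl q))" for x
  proof -
    from that obtain l where "l < length q - 2" "x = q!Suc l"
      by (auto simp: in_set_conv_nth nth_butlast nth_tl numeral_2_eq_2)
    then show ?thesis using interiors_disjoint[of "Suc l"] by simp
  qed
  then show ?thesis
    using p q unfolding cycle_def induced_path_def by (auto simp: distinct_butlast distinct_tl)
qed

lemma set_cycle: "set cycle \<subseteq> V"
proof -
  have "set (butlast (tl q)) \<subseteq> set q"
    using in_set_butlastD set_drop_subset[of 1 q] by (fastforce simp: drop_Suc)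
  then show ?thesis using p q unfolding cycle_def induced_path_def walk_def by auto
qed

lemma cycle_adjacent:
  assumes "i < length cycle"
  shows "E (cycle!i) (cycle!((i + 1) mod length cycle))"
proof -
  let ?m = "length p" and ?k = "length q" and ?n = "length cycle"
  consider "Suc i < ?m" | "Suc i = ?m" | "?m \<le> i" "Suc i < ?n" | "Suc i = ?n"
    using assms by linarith
  then show ?thesis
  proof cases
    case 1
    then show ?thesis using p_adjacent nth_cycle length_cycle q_length by simp
  next
    case 2
    then have "i = length p - 1" by simp
    then show ?thesis
      using 2 q_adjacent[of 0] nth_cycle[of i] nth_cycle[of "Suc i"] length_cycle q_length p_last
      by simp
  next
    case 3
    then have "Suc i - ?m = Suc (i - ?m)" by (simp add: Suc_diff_le)
    then show ?thesis
      using 3 q_adjacent[of "i - ?m + 1"] nth_cycle[of i] nth_cycle[of "Suc i"] length_cycle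
      by simp
  next
    case 4
    then have "i - ?m + 1 = ?k - 2" "\<not> i < ?m" "Suc (?k - 2) = ?k - 1" "p \<noteq> []"
      using length_cycle p_length q_length by auto
    then show ?thesis
      using 4 q_adjacent[of "?k - 2"] nth_cycle[of i] nth_cycle[of 0] p_hd p_length length_cycle
      by simp
  qed
qed

lemma cycle_chord_forward:
  assumes ij: "i < j" "j < length cycle" and edge: "E (cycle!i) (cycle!j)"
  shows "j = Suc i \<or> (i = 0 \<and> j = length cycle - 1)"
proof -
  let ?m = "length p" and ?k = "length q"
  consider "j < ?m" | "i < ?m" "?m \<le> j" | "?m \<le> i" using ij by linarith
  then show ?thesis
  proof cases
    case 1
    then show ?thesis using p_chordless[of i j] nth_cycle ij edge by simp
  next
    case 2
    define l where "l = j - ?m + 1"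
    have l: "0 < l" "l < ?k - 1" "cycle!j = q!l" "cycle!i = p!i"
      using 2 ij length_cycle nth_cycle unfolding l_def by auto
    consider "i = 0" | "i = ?m - 1" | "0 < i" "i < ?m - 1" using 2 by linarith
    then show ?thesis
    proof cases
      case 1
      then have "E (q!(?k - 1)) (q!l)" using edge l p_hd by simp
      then have "?k - 1 = Suc l" using q_chordless[of "?k - 1" l] l by auto
      then have "j = length cycle - 1" using 2 l_def length_cycle q_length by linarith
      then show ?thesis using 1 by simp
    next
      case 3: 2
      then have "E (q!0) (q!l)" using edge l p_last by simp
      moreover have "q \<noteq> []" "l < ?k" using l q_length by auto
      ultimately have "l = 1" using q_chordless[of 0 l] l by auto
      then have "j = Suc i" using 3 2 l_def p_length by simp
      then show ?thesis ..
    next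
      case 3
      then show ?thesis using no_cross_edge[of i l] l edge by simp
    qed
  next
    case 3
    then have "E (q!(i - ?m + 1)) (q!(j - ?m + 1))" "j - ?m + 1 < ?k"
      using nth_cycle ij edge length_cycle by auto
    moreover have "i - ?m + 1 < j - ?m + 1" using ij 3 by simp
    ultimately have "j - ?m + 1 = Suc (i - ?m + 1)"
      using q_chordless[of "i - ?m + 1" "j - ?m + 1"] by simp
    then have "j = Suc i" using 3 ij by linarith
    then show ?thesis ..
  qed
qed

lemma cycle_chordless:
  assumes "i < length cycle" "j < length cycle" and edge: "E (cycle!i) (cycle!j)"
  shows "j = (i + 1) mod length cycle \<or> i = (j + 1) mod length cycle"
proof -
  have "i \<noteq> j" using edge irr by (auto dest: irreflpD)
  moreover have "E (cycle!j) (cycle!i)" using edge by (rule sympD[OF sym])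
  moreover have "length cycle - 1 + 1 = length cycle" using assms(1) by linarith
  ultimately show ?thesis
    using assms cycle_chord_forward[of i j] cycle_chord_forward[of j i]
    by (cases "i < j") auto
qed

lemma induced_cycle: "induced_cycle V E cycle"
  unfolding induced_cycle_def
  using length_cycle p_length q_length distinct_cycle set_cycle cycle_adjacent cycle_chordless
  by simp

end

lemma walk_length_ge_3:
  assumes walk: "walk E S p" and "hd p \<noteq> last p" "\<not> E (hd p) (last p)"
  shows "3 \<le> length p"
proof (rule ccontr)
  have "p \<noteq> []" using walk unfolding walk_def by simp
  assume "\<not> 3 \<le> length p"
  moreover have "0 < length p" using \<open>p \<noteq> []\<close> by simp
  ultimately consider "length p = 1" | "length p = 2" by linarith
  then show False
    using assms \<open>p \<noteq> []\<close> unfolding walk_def by cases (auto simp: hd_conv_nth last_conv_nth)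
qed

lemma induced_path_mono: "induced_path E S p \<Longrightarrow> S \<subseteq> T \<Longrightarrow> induced_path E T p"
  unfolding induced_path_def walk_def by auto

lemma exists_chordless_detour:
  assumes sym: "symp E" and irr: "irreflp E" and "N \<subseteq> T"
    and "u \<in> N" "w \<in> N" "reach_in E T u w" "\<not> reach_in E N u w"
  obtains p where "induced_path E T p" "hd p \<in> N" "last p \<in> N" "\<not> reach_in E N (hd p) (last p)"
    "3 \<le> length p" "\<And>l. 0 < l \<Longrightarrow> l < length p - 1 \<Longrightarrow> p!l \<notin> N"
proof -
  let ?detour = "\<lambda>p. walk E T p \<and> hd p \<in> N \<and> last p \<in> N \<and> \<not> reach_in E N (hd p) (last p)"
  obtain p0 where "walk E T p0" "hd p0 = u" "last p0 = w"
    using reach_in_imp_walk[OF assms(6)] assms(3,4) by blast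
  with assms(4-7) obtain p where "?detour p" and shortest: "\<And>p'. ?detour p' \<Longrightarrow> length p \<le> length p'"
    using ex_has_least_nat[of ?detour p0 length] by blast
  then have walk: "walk E T p" and ends: "hd p \<in> N" "last p \<in> N"
    and apart: "\<not> reach_in E N (hd p) (last p)" by auto
  have "induced_path E T p"
  proof (rule shortest_walk_induced_path[OF sym irr walk])
    fix p' assume "walk E T p'" "hd p' = hd p" "last p' = last p"
    then show "length p \<le> length p'" using shortest ends apart by simp
  qed
  have "p \<noteq> []" using walk unfolding walk_def by simp
  have "hd p \<noteq> last p" using apart by auto
  moreover have "\<not> E (hd p) (last p)" using apart reach_in_edge[OF _ ends] by blast
  ultimately have "3 \<le> length p" using walk_length_ge_3[OF walk] by blast
  moreover have "p!l \<notin> N" if l: "0 < l" "l < length p - 1" for l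
    \<comment> \<open>otherwise one of the two halves of p would be a shorter detour\<close>
  proof
    assume "p!l \<in> N"
    show False
    proof (cases "reach_in E N (hd p) (p!l)")
      case True
      then have "\<not> reach_in E N (p!l) (last p)" using apart reach_in_trans[OF True] by blast
      then have "?detour (drop l p)"
        using walk_drop[OF walk, of l] l \<open>p!l \<in> N\<close> ends by (simp add: hd_drop_conv_nth)
      then show False using shortest[of "drop l p"] l by simp
    next
      case False
      have "hd (take (Suc l) p) = hd p" "last (take (Suc l) p) = p!l"
        using l \<open>p \<noteq> []\<close> by (auto simp: hd_conv_nth last_conv_nth)
      then have "?detour (take (Suc l) p)"
        using walk_take[OF walk, of l] l \<open>p!l \<in> N\<close> ends False by simp
      then show False using shortest[of "take (Suc l) p"] l by simp
    qed
  qed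
  ultimately show thesis using that[OF \<open>induced_path E T p\<close> ends apart] by blast
qed

lemma exists_induced_path_through:
  assumes sym: "symp E" and irr: "irreflp E" and "connected_in E X"
    and "x \<in> X" "E x a" "y \<in> X" "E y b" and "a \<noteq> b" "\<not> E a b"
  obtains q where "induced_path E (X \<union> {a, b}) q" "hd q = b" "last q = a" "3 \<le> length q"
    "\<And>l. 0 < l \<Longrightarrow> l < length q - 1 \<Longrightarrow> q!l \<in> X"
proof -
  let ?T = "X \<union> {a, b}"
  have "reach_in E ?T b y" "reach_in E ?T x a"
    using assms(4-7) sym by (auto intro: reach_in_edge dest: sympD)
  moreover have "reach_in E ?T y x"
    using assms(3,4,6) unfolding connected_in_def by (blast intro: reach_in_mono)
  ultimately have "reach_in E ?T b a" by (blast intro: reach_in_trans)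
  then obtain q where q: "induced_path E ?T q" "hd q = b" "last q = a"
    using reach_in_imp_induced_path[OF sym irr] by blast
  then have "walk E ?T q" "q \<noteq> []" "distinct q" unfolding induced_path_def walk_def by auto
  have "\<not> E b a" using \<open>\<not> E a b\<close> sympD[OF sym] by blast
  then have "3 \<le> length q" using walk_length_ge_3[OF \<open>walk E ?T q\<close>] q \<open>a \<noteq> b\<close> by simp
  moreover have "q!l \<in> X" if "0 < l" "l < length q - 1" for l
  proof -
    have "q!l \<in> set q" using that by simp
    then have "q!l \<in> ?T" using q(1) unfolding induced_path_def walk_def by blast
    moreover have "q!l \<noteq> q!0" "q!l \<noteq> q!(length q - 1)"
      using that \<open>distinct q\<close> \<open>q \<noteq> []\<close> by (simp_all add: nth_eq_iff_index_eq)
    then have "q!l \<noteq> b" "q!l \<noteq> a"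
      using q \<open>q \<noteq> []\<close> by (simp_all add: hd_conv_nth last_conv_nth)
    ultimately show ?thesis by auto
  qed
  ultimately show thesis using that q by blast
qed


lemma chordal_reach_in_nbhd:
  assumes g: "graph V E" and chordal: "chordal V E" and "X \<subseteq> V" and X: "connected_in E X"
    and "u \<in> nbhd V E X" "w \<in> nbhd V E X" "reach_in E (V - X) u w"
  shows "reach_in E (nbhd V E X) u w"
proof (rule ccontr)
  let ?N = "nbhd V E X"
  have sym: "symp E" and irr: "irreflp E" using g by (simp_all add: graph_symp graph_irreflp)
  have N_sub: "?N \<subseteq> V - X" unfolding nbhd_def by auto
  assume "\<not> reach_in E ?N u w"
  then obtain p where p: "induced_path E (V - X) p" and ends: "hd p \<in> ?N" "last p \<in> ?N"
    and apart: "\<not> reach_in E ?N (hd p) (last p)" and p_length: "3 \<le> length p"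
    and p_interior: "\<And>i. 0 < i \<Longrightarrow> i < length p - 1 \<Longrightarrow> p!i \<notin> ?N"
    using exists_chordless_detour[OF sym irr N_sub assms(5-7)] by blast
  obtain x y where xy: "x \<in> X" "E x (hd p)" "y \<in> X" "E y (last p)"
    using ends unfolding nbhd_def by auto
  have "hd p \<noteq> last p" using apart by auto
  moreover have "\<not> E (hd p) (last p)" using apart ends reach_in_edge[of E "hd p" "last p" ?N] by blast
  ultimately obtain q where q: "induced_path E (X \<union> {hd p, last p}) q"
    and q_ends: "hd q = last p" "last q = hd p" and q_length: "3 \<le> length q"
    and q_interior: "\<And>l. 0 < l \<Longrightarrow> l < length q - 1 \<Longrightarrow> q!l \<in> X"
    using exists_induced_path_through[OF sym irr X xy] by blast
  have p_set: "set p \<subseteq> V - X" using p unfolding induced_path_def walk_def by simp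
  interpret glued_induced_paths V E p q
  proof
    show "induced_path E V p" using p induced_path_mono by blast
    show "induced_path E V q" using q induced_path_mono ends N_sub \<open>X \<subseteq> V\<close> by blast
    show "\<And>l. 0 < l \<Longrightarrow> l < length q - 1 \<Longrightarrow> q!l \<notin> set p"
      using q_interior p_set by blast
    show "\<not> E (p!i) (q!l)" if "0 < i" "i < length p - 1" "0 < l" "l < length q - 1" for i l
    proof
      assume "E (p!i) (q!l)"
      then have "E (q!l) (p!i)" by (rule sympD[OF sym])
      moreover have "p!i \<in> V - X" using p_set that by (simp add: subset_iff)
      ultimately have "p!i \<in> ?N" using q_interior[of l] that unfolding nbhd_def by blast
      then show False using p_interior that by blast
    qed
  qed (simp_all add: sym irr p_length q_length q_ends)
  show False using induced_cycle chordal unfolding chordal_def by blast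
qed

lemma reach_in_exit:
  assumes "reach_in E T t v" and "t \<in> T - X" and "v \<in> X"
  shows "\<exists>s \<in> T - X. reach_in E (T - X) t s \<and> (\<exists>x \<in> X. E s x)"
proof -
  have "(\<exists>s \<in> T - X. reach_in E (T - X) t s \<and> (\<exists>x \<in> X. E s x)) \<or> reach_in E (T - X) t v"
    using assms(1) unfolding reach_in_def
  proof (induction rule: rtranclp_induct)
    case (step y z)
    then show ?case
      using reach_in_in_set[of E "T - X" t y] assms(2)
      by (cases "z \<in> X") (auto simp: reach_in_def intro: rtranclp.rtrancl_into_rtrancl)
  qed simp
  then show ?thesis using assms(3) reach_in_in_set[of E "T - X" t v] assms(2) by blast
qed

theorem lemma2p1:
  fixes V :: "'a set" and E :: "'a \<Rightarrow> 'a \<Rightarrow> bool" and X :: "'a set"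
  assumes "graph V E" and "connected_in E V" and "chordal V E"
    and "X \<subseteq> V" and "connected_in E X"
  shows "\<exists>f. bij_betw f (components E (nbhd V E X)) (components E (V - X))
           \<and> (\<forall>C \<in> components E (nbhd V E X). \<forall>H \<in> components E (V - X).
                 C \<subseteq> H \<longleftrightarrow> H = f C)"
proof (rule components_bij_betw)
  show sym: "symp E" using assms(1) by (rule graph_symp)
  show "nbhd V E X \<subseteq> V - X" unfolding nbhd_def by auto
  show "\<exists>s \<in> nbhd V E X. reach_in E (V - X) t s" if t: "t \<in> V - X" for t
  proof -
    obtain x where "x \<in> X" using assms(5) unfolding connected_in_def by auto
    then have "reach_in E V t x" using assms(2,4) t unfolding connected_in_def by blast
    then obtain s x' where "s \<in> V - X" "reach_in E (V - X) t s" "x' \<in> X" "E s x'"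
      using reach_in_exit[OF _ t \<open>x \<in> X\<close>] by blast
    moreover have "E x' s" using \<open>E s x'\<close> by (rule sympD[OF sym])
    ultimately show ?thesis unfolding nbhd_def by blast
  qed
  show "reach_in E (nbhd V E X) u w"
    if "u \<in> nbhd V E X" "w \<in> nbhd V E X" "reach_in E (V - X) u w" for u w
    by (rule chordal_reach_in_nbhd[OF assms(1,3-5) that])
qed

end
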